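(* With the notation of the context, let $\beta^*=\inf_{x\in\Delta}F(x)$. For every $x^*\in\Delta$ with $F(x^* )=\beta^*$ there exists a relation $r_0$ of type 4b such that $f_{r_0}(x^* )=\beta^*$.
   Context: Fix an integer $n\ge2$ and free generators $\xi_1,\dots,\xi_n$ of a free group; throughout $i,j,k\in\{1,\dots,n\}$ and $t,s,p\in\{-1,+1\}$. Let $\Psi$ be the set of reduced words $\xi_i^{2t}$; $\xi_i^t\xi_j^{2s}$ ($i\ne j$); $\xi_i^t\xi_j^s\xi_k^p$ ($i\ne j$, $j\ne k$). For a letter $\xi_a^x$ let $S(\xi_a^x)\subset\Psi$ be the set of words in $\Psi$ beginning with $\xi_a^x$, namely $\{\xi_a^{2x}\}\cup\{\xi_a^x\xi_j^{2s}\}\cup\{\xi_a^x\xi_j^s\xi_k^p\}$; for $a\ne b$ let $S(\xi_a^x\xi_b^y)=\{\xi_a^x\xi_b^{2y}\}\cup\{\xi_a^x\xi_b^y\xi_k^p: k\ne b\}$. A relation $r$ is a pair $(\psi_r,\Psi_r)$ with $\psi_r\in\Psi$, $\Psi_r\subseteq\Psi$. Let $\mathcal{F}$ be the collection of the following relations (indices $i_0\ne j_0$, in type 5a $i_0,j_0,k_0$ pairwise distinct, all signs arbitrary): 1a: $\psi_r=\xi_{i_0}^{2t_0}$, $\Psi_r=\Psi\setminus S(\xi_{i_0}^{t_0})$; 2b: $\psi_r=\xi_{i_0}^{t_0}\xi_{j_0}^{2s_0}$, $\Psi_r=\Psi\setminus S(\xi_{i_0}^{t_0}\xi_{j_0}^{s_0})$;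 3a: $\psi_r=\xi_{i_0}^{t_0}\xi_{j_0}^{s_0}\xi_{i_0}^{t_0}$, $\Psi_r=\Psi\setminus S(\xi_{j_0}^{s_0}\xi_{i_0}^{t_0})$; 4b: $\psi_r=\xi_{i_0}^{t_0}\xi_{j_0}^{s_0}\xi_{i_0}^{-t_0}$, $\Psi_r=S(\xi_{i_0}^{t_0})$; 5a: $\psi_r=\xi_{i_0}^{t_0}\xi_{j_0}^{s_0}\xi_{k_0}^{p_0}$, $\Psi_r=\Psi\setminus S(\xi_{j_0}^{s_0}\xi_{k_0}^{p_0})$. Let $\Delta=\{x\in\mathbb{R}^\Psi: x(\psi)>0\ \forall\psi,\ \sum_{\psi}x(\psi)=1\}$. For a relation $r$ and $x\in\Delta$ put $x_r=x(\psi_r)$, $X_r=\sum_{\psi\in\Psi_r}x(\psi)$, $f_r(x)=\frac{1-x_r}{x_r}\cdot\frac{1-X_r}{X_r}$, and $F(x)=\max_{r\in\mathcal{F}}f_r(x)$. *)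

theory Defs
  imports Complex_Main
begin

text \<open>A letter xi_i^t is the pair (i, t) with i in {1..n}, t in {-1,1}; a word is a list of letters.\<close>

type_synonym letter = "nat \<times> int"
type_synonym word = "letter list"

definition Sg :: "int set" where "Sg = {-1, 1}"

definition Psi :: "nat \<Rightarrow> word set" where
  "Psi n =
     {[(i,t),(i,t)] | i t. i \<in> {1..n} \<and> t \<in> Sg}
   \<union> {[(i,t),(j,s),(j,s)] | i t j s. i \<in> {1..n} \<and> j \<in> {1..n} \<and> t \<in> Sg \<and> s \<in> Sg \<and> i \<noteq> j}
   \<union> {[(i,t),(j,s),(k,p)] | i t j s k p. i \<in> {1..n} \<and> j \<in> {1..n} \<and> k \<in> {1..n}
        \<and> t \<in> Sg \<and> s \<in> Sg \<and> p \<in> Sg \<and> i \<noteq> j \<and> j \<noteq> k}"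

definition S1 :: "nat \<Rightarrow> letter \<Rightarrow> word set" where
  "S1 n l = {w \<in> Psi n. hd w = l}"

text \<open>S(xi_a^x xi_b^y) = {xi_a^x xi_b^(2y)} \<union> {xi_a^x xi_b^y xi_k^p : k \<noteq> b}.\<close>
definition S2 :: "nat \<Rightarrow> letter \<Rightarrow> letter \<Rightarrow> word set" where
  "S2 n l m = {[l, m, m]} \<union> {[l, m, (k,p)] | k p. k \<in> {1..n} \<and> p \<in> Sg \<and> k \<noteq> fst m}"

text \<open>A relation r = (psi_r, Psi_r).\<close>
type_synonym relation = "word \<times> word set"

definition rel_1a :: "nat \<Rightarrow> relation set" where
  "rel_1a n = {([(i0,t0),(i0,t0)], Psi n - S1 n (i0,t0)) | i0 t0. i0 \<in> {1..n} \<and> t0 \<in> Sg}"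

definition rel_2b :: "nat \<Rightarrow> relation set" where
  "rel_2b n = {([(i0,t0),(j0,s0),(j0,s0)], Psi n - S2 n (i0,t0) (j0,s0)) | i0 t0 j0 s0.
     i0 \<in> {1..n} \<and> j0 \<in> {1..n} \<and> t0 \<in> Sg \<and> s0 \<in> Sg \<and> i0 \<noteq> j0}"

definition rel_3a :: "nat \<Rightarrow> relation set" where
  "rel_3a n = {([(i0,t0),(j0,s0),(i0,t0)], Psi n - S2 n (j0,s0) (i0,t0)) | i0 t0 j0 s0.
     i0 \<in> {1..n} \<and> j0 \<in> {1..n} \<and> t0 \<in> Sg \<and> s0 \<in> Sg \<and> i0 \<noteq> j0}"

definition rel_4b :: "nat \<Rightarrow> relation set" where
  "rel_4b n = {([(i0,t0),(j0,s0),(i0,-t0)], S1 n (i0,t0)) | i0 t0 j0 s0.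
     i0 \<in> {1..n} \<and> j0 \<in> {1..n} \<and> t0 \<in> Sg \<and> s0 \<in> Sg \<and> i0 \<noteq> j0}"

definition rel_5a :: "nat \<Rightarrow> relation set" where
  "rel_5a n = {([(i0,t0),(j0,s0),(k0,p0)], Psi n - S2 n (j0,s0) (k0,p0)) | i0 t0 j0 s0 k0 p0.
     i0 \<in> {1..n} \<and> j0 \<in> {1..n} \<and> k0 \<in> {1..n} \<and> t0 \<in> Sg \<and> s0 \<in> Sg \<and> p0 \<in> Sg
     \<and> i0 \<noteq> j0 \<and> j0 \<noteq> k0 \<and> i0 \<noteq> k0}"

definition Fam :: "nat \<Rightarrow> relation set" where
  "Fam n = rel_1a n \<union> rel_2b n \<union> rel_3a n \<union> rel_4b n \<union> rel_5a n"

text \<open>The open simplex Delta in R^Psi, with points represented as functions word => real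
  (only the values on Psi matter).\<close>
definition Delta :: "nat \<Rightarrow> (word \<Rightarrow> real) set" where
  "Delta n = {x. (\<forall>\<psi>\<in>Psi n. x \<psi> > 0) \<and> (\<Sum>\<psi>\<in>Psi n. x \<psi>) = 1}"

definition f_rel :: "relation \<Rightarrow> (word \<Rightarrow> real) \<Rightarrow> real" where
  "f_rel r x = (let xr = x (fst r); Xr = (\<Sum>\<psi>\<in>snd r. x \<psi>)
               in ((1 - xr) / xr) * ((1 - Xr) / Xr))"

definition F_max :: "nat \<Rightarrow> (word \<Rightarrow> real) \<Rightarrow> real" where
  "F_max n x = Max ((\<lambda>r. f_rel r x) ` Fam n)"

end

theory Submission
  imports Defs
begin

text \<open>Call a word \<open>\<xi>\<^sub>i\<^sup>t \<xi>\<^sub>j\<^sup>s \<xi>\<^sub>i\<^sup>-\<^sup>t\<close> a conjugate word; these are exactly the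
  words \<open>\<psi>\<^sub>r\<close> of the relations of type 4b. Every word \<open>u\<close> of \<open>\<Psi>\<close> is completed to a conjugate
  word \<open>\<pi> u\<close> with the same first letter. Moving a small mass \<open>e\<close> from \<open>\<pi> u\<close> to \<open>u\<close>, for every
  non-conjugate \<open>u\<close>, keeps the point in \<open>\<Delta>\<close>, raises \<open>x\<^sub>r\<close> by \<open>e\<close> for every relation not of
  type 4b, and does not lower \<open>X\<^sub>r\<close>, because the complement of \<open>\<Psi>\<^sub>r\<close> is a union of sets
  \<open>S(\<dots>)\<close> determined by a prefix that \<open>\<pi>\<close> preserves. Hence all these \<open>f\<^sub>r\<close> strictly decrease.
  If no relation of type 4b attained \<open>\<beta>\<^sup>*\<close> at a minimiser, then by continuity the 4b values
  would stay below \<open>\<beta>\<^sup>*\<close> for small \<open>e\<close>, and \<open>F\<close> would drop below its infimum.\<close>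

definition transfer :: "'a set \<Rightarrow> ('a \<Rightarrow> 'a) \<Rightarrow> 'a \<Rightarrow> real" where
  "transfer N \<pi> \<psi> = (\<Sum>u\<in>N. of_bool (\<psi> = u) - of_bool (\<psi> = \<pi> u))"

lemma sum_transfer:
  assumes "finite N" "finite A"
  shows "sum (transfer N \<pi>) A = (\<Sum>u\<in>N. of_bool (u \<in> A) - of_bool (\<pi> u \<in> A))"
proof -
  have "sum (transfer N \<pi>) A = (\<Sum>u\<in>N. \<Sum>\<psi>\<in>A. of_bool (\<psi> = u) - of_bool (\<psi> = \<pi> u))"
    unfolding transfer_def by (rule sum.swap)
  also have "\<dots> = (\<Sum>u\<in>N. of_bool (u \<in> A) - of_bool (\<pi> u \<in> A))"
    using assms(2) by (simp add: sum_subtractf of_bool_def sum.delta)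
  finally show ?thesis .
qed

lemma sum_transfer_eq_0:
  assumes "finite N" "finite A" "N \<subseteq> A" "\<pi> ` N \<subseteq> A"
  shows "sum (transfer N \<pi>) A = 0"
  using assms by (simp add: sum_transfer subset_iff image_subset_iff)

lemma sum_transfer_nonneg:
  assumes "finite N" "finite A" "\<And>u. u \<in> N \<Longrightarrow> \<pi> u \<in> A \<Longrightarrow> u \<in> A"
  shows "0 \<le> sum (transfer N \<pi>) A"
  unfolding sum_transfer[OF assms(1,2)] using assms(3) by (intro sum_nonneg) auto

lemma transfer_source:
  assumes "finite N" "\<psi> \<in> N" "\<psi> \<notin> \<pi> ` N"
  shows "transfer N \<pi> \<psi> = 1"
proof -
  have "transfer N \<pi> \<psi> = (\<Sum>u\<in>N. of_bool (\<psi> = u)) - (\<Sum>u\<in>N. of_bool (\<psi> = \<pi> u))"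
    unfolding transfer_def by (rule sum_subtractf)
  then show ?thesis
    using assms by (auto simp: of_bool_def sum.delta intro!: sum.neutral)
qed

lemma odds_product_less:
  fixes a a' b b' :: real
  assumes "0 < a" "a < a'" "a' \<le> 1" "0 < b" "b \<le> b'" "b' \<le> 1" "b < 1"
  shows "((1 - a') / a') * ((1 - b') / b') < ((1 - a) / a) * ((1 - b) / b)"
proof -
  have "(1 - a') * a < (1 - a) * a'" using assms by (simp add: algebra_simps)
  then have A: "0 \<le> (1 - a') / a'" "(1 - a') / a' < (1 - a) / a"
    using assms by (auto simp: divide_simps)
  have "(1 - b') * b \<le> (1 - b) * b'" using assms by (simp add: algebra_simps)
  then have B: "0 \<le> (1 - b') / b'" "(1 - b') / b' \<le> (1 - b) / b" "0 < (1 - b) / b"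
    using assms by (auto simp: divide_simps)
  have "((1 - a') / a') * ((1 - b') / b') \<le> ((1 - a') / a') * ((1 - b) / b)"
    using A B by (intro mult_left_mono)
  also have "\<dots> < ((1 - a) / a) * ((1 - b) / b)"
    using A B by (intro mult_strict_right_mono)
  finally show ?thesis .
qed

lemma tendsto_f_rel:
  assumes "\<And>\<psi>. ((\<lambda>e. y e \<psi>) \<longlongrightarrow> x \<psi>) F" "x (fst r) \<noteq> 0" "sum x (snd r) \<noteq> 0"
  shows "((\<lambda>e. f_rel r (y e)) \<longlongrightarrow> f_rel r x) F"
  unfolding f_rel_def Let_def
  by (intro tendsto_mult tendsto_divide tendsto_diff tendsto_const tendsto_sum assms)

lemma Sg_uminus: "t \<in> Sg \<Longrightarrow> - t \<in> Sg"
  by (auto simp: Sg_def)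

lemma Sg_uminus_neq: "t \<in> Sg \<Longrightarrow> - t \<noteq> t"
  by (auto simp: Sg_def)

lemma one_in_Sg: "1 \<in> Sg"
  by (simp add: Sg_def)

lemma finite_Psi: "finite (Psi n)"
proof (rule finite_subset)
  show "Psi n \<subseteq> {w. set w \<subseteq> {1..n} \<times> Sg \<and> length w \<le> 3}"
    unfolding Psi_def by auto
  show "finite {w. set w \<subseteq> {1..n} \<times> Sg \<and> length w \<le> 3}"
    by (rule finite_lists_length_le) (simp add: Sg_def)
qed

lemma square_in_Psi: "i \<in> {1..n} \<Longrightarrow> t \<in> Sg \<Longrightarrow> [(i,t),(i,t)] \<in> Psi n"
  unfolding Psi_def by blast

lemma triple_in_Psi:
  "i \<in> {1..n} \<Longrightarrow> j \<in> {1..n} \<Longrightarrow> k \<in> {1..n} \<Longrightarrow> t \<in> Sg \<Longrightarrow> s \<in> Sg \<Longrightarrow> p \<in> Sg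
    \<Longrightarrow> i \<noteq> j \<Longrightarrow> j \<noteq> k \<Longrightarrow> [(i,t),(j,s),(k,p)] \<in> Psi n"
  unfolding Psi_def by blast

lemma letter_square_in_Psi:
  "i \<in> {1..n} \<Longrightarrow> j \<in> {1..n} \<Longrightarrow> t \<in> Sg \<Longrightarrow> s \<in> Sg \<Longrightarrow> i \<noteq> j
    \<Longrightarrow> [(i,t),(j,s),(j,s)] \<in> Psi n"
  unfolding Psi_def by blast

lemma Psi_cases:
  assumes "u \<in> Psi n"
  obtains i t where "u = [(i,t),(i,t)]" "i \<in> {1..n}" "t \<in> Sg"
  | i t j s k p where "u = [(i,t),(j,s),(k,p)]" "i \<in> {1..n}" "j \<in> {1..n}" "k \<in> {1..n}"
      "t \<in> Sg" "s \<in> Sg" "p \<in> Sg" "i \<noteq> j"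
  using assms unfolding Psi_def by blast

definition conj_word :: "word \<Rightarrow> bool" where
  "conj_word w \<longleftrightarrow> length w = 3 \<and> w ! 2 = (fst (w ! 0), - snd (w ! 0))"

definition other_index :: "nat \<Rightarrow> nat" where
  "other_index i = (if i = 1 then 2 else 1)"

definition conj_completion :: "word \<Rightarrow> word" where
  "conj_completion u =
     (if length u = 3 then [u ! 0, u ! 1, (fst (u ! 0), - snd (u ! 0))]
      else [u ! 0, (other_index (fst (u ! 0)), 1), (fst (u ! 0), - snd (u ! 0))])"

lemma other_index: "n \<ge> 2 \<Longrightarrow> i \<in> {1..n} \<Longrightarrow> other_index i \<in> {1..n} \<and> other_index i \<noteq> i"
  by (auto simp: other_index_def)

lemma conj_word_conj_completion: "conj_word (conj_completion u)"
  by (simp add: conj_completion_def conj_word_def)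

lemma conj_completion_in_Psi:
  assumes "n \<ge> 2" "u \<in> Psi n"
  shows "conj_completion u \<in> Psi n \<and> hd (conj_completion u) = hd u"
  using assms(2)
proof (cases rule: Psi_cases)
  case (1 i t)
  then show ?thesis
    using other_index[OF assms(1), of i]
    by (auto simp: conj_completion_def intro!: triple_in_Psi Sg_uminus one_in_Sg)
next
  case (2 i t j s k p)
  then show ?thesis by (auto simp: conj_completion_def intro!: triple_in_Psi Sg_uminus)
qed

lemma S2_conj_completion:
  assumes "u \<in> S2 n l m" "fst l \<noteq> fst m" "fst l \<in> {1..n}" "snd l \<in> Sg"
  shows "conj_completion u \<in> S2 n l m"
proof -
  have "conj_completion u = [l, m, (fst l, - snd l)]"
    using assms(1) unfolding S2_def conj_completion_def by auto
  then show ?thesis unfolding S2_def using assms(2-4) Sg_uminus by auto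
qed

text \<open>The relations whose value strictly decreases under the mass transfer.\<close>

definition shiftable_rel :: "nat \<Rightarrow> relation \<Rightarrow> bool" where
  "shiftable_rel n r \<longleftrightarrow> fst r \<in> Psi n \<and> \<not> conj_word (fst r) \<and> snd r \<subseteq> Psi n
     \<and> snd r \<noteq> {} \<and> \<not> Psi n \<subseteq> snd r
     \<and> (\<forall>u\<in>Psi n. conj_completion u \<in> snd r \<longrightarrow> u \<in> snd r)"

lemma shiftable_relI:
  assumes "fst r \<in> Psi n" "\<not> conj_word (fst r)" "snd r = Psi n - Y"
    "\<And>u. u \<in> Psi n \<Longrightarrow> u \<in> Y \<Longrightarrow> conj_completion u \<in> Y"
    "w \<in> Psi n" "w \<notin> Y" "w' \<in> Psi n" "w' \<in> Y"
  shows "shiftable_rel n r"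
  using assms unfolding shiftable_rel_def by blast

lemma shiftable_rel_1a:
  assumes "n \<ge> 2" "r \<in> rel_1a n"
  shows "shiftable_rel n r"
proof -
  obtain i t where r: "r = ([(i,t),(i,t)], Psi n - S1 n (i,t))" "i \<in> {1..n}" "t \<in> Sg"
    using assms(2) unfolding rel_1a_def by blast
  define i' where "i' = other_index i"
  have i': "i' \<in> {1..n}" "i' \<noteq> i" using other_index[OF assms(1) r(2)] by (auto simp: i'_def)
  show ?thesis
  proof (rule shiftable_relI[of r n "S1 n (i,t)" "[(i',t),(i',t)]" "[(i,t),(i,t)]"])
    show "\<And>u. u \<in> Psi n \<Longrightarrow> u \<in> S1 n (i,t) \<Longrightarrow> conj_completion u \<in> S1 n (i,t)"
      using conj_completion_in_Psi[OF assms(1)] by (auto simp: S1_def)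
  qed (use r i' in \<open>auto simp: conj_word_def S1_def intro: square_in_Psi\<close>)
qed

lemma shiftable_rel_2b:
  assumes "r \<in> rel_2b n"
  shows "shiftable_rel n r"
proof -
  obtain i t j s where r: "r = ([(i,t),(j,s),(j,s)], Psi n - S2 n (i,t) (j,s))"
     "i \<in> {1..n}" "j \<in> {1..n}" "t \<in> Sg" "s \<in> Sg" "i \<noteq> j"
    using assms unfolding rel_2b_def by blast
  show ?thesis
    by (rule shiftable_relI[of r n "S2 n (i,t) (j,s)" "[(i,t),(i,t)]" "[(i,t),(j,s),(j,s)]"])
       (use r S2_conj_completion[of _ n "(i,t)" "(j,s)"]
        in \<open>auto simp: conj_word_def S2_def intro: square_in_Psi triple_in_Psi letter_square_in_Psi\<close>)
qed

lemma shiftable_rel_3a: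
  assumes "r \<in> rel_3a n"
  shows "shiftable_rel n r"
proof -
  obtain i t j s where r: "r = ([(i,t),(j,s),(i,t)], Psi n - S2 n (j,s) (i,t))"
     "i \<in> {1..n}" "j \<in> {1..n}" "t \<in> Sg" "s \<in> Sg" "i \<noteq> j"
    using assms unfolding rel_3a_def by blast
  show ?thesis
    by (rule shiftable_relI[of r n "S2 n (j,s) (i,t)" "[(i,t),(i,t)]" "[(j,s),(i,t),(i,t)]"])
       (use r S2_conj_completion[of _ n "(j,s)" "(i,t)"] Sg_uminus_neq[of t]
        in \<open>auto simp: conj_word_def S2_def intro: square_in_Psi triple_in_Psi letter_square_in_Psi\<close>)
qed

lemma shiftable_rel_5a:
  assumes "r \<in> rel_5a n"
  shows "shiftable_rel n r"
proof -
  obtain i t j s k p where r: "r = ([(i,t),(j,s),(k,p)], Psi n - S2 n (j,s) (k,p))"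
     "i \<in> {1..n}" "j \<in> {1..n}" "k \<in> {1..n}" "t \<in> Sg" "s \<in> Sg" "p \<in> Sg"
     "i \<noteq> j" "j \<noteq> k" "i \<noteq> k"
    using assms unfolding rel_5a_def by blast
  show ?thesis
    by (rule shiftable_relI[of r n "S2 n (j,s) (k,p)" "[(i,t),(i,t)]" "[(j,s),(k,p),(k,p)]"])
       (use r S2_conj_completion[of _ n "(j,s)" "(k,p)"]
        in \<open>auto simp: conj_word_def S2_def intro: square_in_Psi triple_in_Psi letter_square_in_Psi\<close>)
qed

lemma shiftable_rel_Fam:
  "n \<ge> 2 \<Longrightarrow> r \<in> Fam n \<Longrightarrow> r \<notin> rel_4b n \<Longrightarrow> shiftable_rel n r"
  unfolding Fam_def
  using shiftable_rel_1a shiftable_rel_2b shiftable_rel_3a shiftable_rel_5a by blast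

lemma rel_4b_word_in_subset:
  assumes "r \<in> rel_4b n"
  shows "fst r \<in> snd r \<and> snd r \<subseteq> Psi n"
proof -
  obtain i t j s where r: "r = ([(i,t),(j,s),(i,-t)], S1 n (i,t))"
     "i \<in> {1..n}" "j \<in> {1..n}" "t \<in> Sg" "s \<in> Sg" "i \<noteq> j"
    using assms unfolding rel_4b_def by blast
  have "[(i,t),(j,s),(i,-t)] \<in> Psi n"
    using r Sg_uminus by (intro triple_in_Psi) auto
  then show ?thesis using r by (auto simp: S1_def)
qed

lemma Fam_word_in_subset:
  assumes "n \<ge> 2" "r \<in> Fam n"
  shows "fst r \<in> Psi n \<and> snd r \<subseteq> Psi n \<and> snd r \<noteq> {}"
  using rel_4b_word_in_subset[of r n] shiftable_rel_Fam[OF assms]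
  by (cases "r \<in> rel_4b n") (auto simp: shiftable_rel_def)

lemma finite_Fam: "n \<ge> 2 \<Longrightarrow> finite (Fam n)"
proof -
  assume "n \<ge> 2"
  then have "r \<in> Psi n \<times> Pow (Psi n)" if "r \<in> Fam n" for r
    using Fam_word_in_subset[of n r] that by (cases r) auto
  then have "Fam n \<subseteq> Psi n \<times> Pow (Psi n)" by blast
  then show ?thesis by (rule finite_subset) (simp add: finite_Psi)
qed

lemma Fam_nonempty: "n \<ge> 2 \<Longrightarrow> Fam n \<noteq> {}"
proof -
  assume "n \<ge> 2"
  then have "([(1,1),(1,1)], Psi n - S1 n (1,1)) \<in> rel_1a n"
    unfolding rel_1a_def by (force simp: one_in_Sg)
  then show ?thesis unfolding Fam_def by blast
qed

lemma sum_Delta_le_1: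
  assumes "x \<in> Delta n" "A \<subseteq> Psi n"
  shows "sum x A \<le> 1"
proof -
  have "sum x A \<le> sum x (Psi n)"
    using assms by (intro sum_mono2 finite_Psi) (auto simp: Delta_def less_imp_le)
  then show ?thesis using assms(1) by (simp add: Delta_def)
qed

lemma sum_Delta_pos: "x \<in> Delta n \<Longrightarrow> A \<subseteq> Psi n \<Longrightarrow> A \<noteq> {} \<Longrightarrow> 0 < sum x A"
  unfolding Delta_def
  by (metis (mono_tags, lifting) finite_Psi finite_subset mem_Collect_eq subset_iff sum_pos)

lemma sum_Delta_less_1:
  assumes "x \<in> Delta n" "A \<subseteq> Psi n" "\<not> Psi n \<subseteq> A"
  shows "sum x A < 1"
proof -
  have "sum x (Psi n) = sum x A + sum x (Psi n - A)"
    using assms(2) finite_Psi by (metis sum.subset_diff add.commute)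
  moreover have "0 < sum x (Psi n - A)"
    using assms by (intro sum_Delta_pos) auto
  ultimately show ?thesis using assms(1) by (simp add: Delta_def)
qed

lemma Delta_pos: "x \<in> Delta n \<Longrightarrow> w \<in> Psi n \<Longrightarrow> 0 < x w"
  by (simp add: Delta_def)

lemma Delta_le_1: "x \<in> Delta n \<Longrightarrow> w \<in> Psi n \<Longrightarrow> x w \<le> 1"
  using sum_Delta_le_1[of x n "{w}"] by simp

lemma f_rel_nonneg:
  assumes "n \<ge> 2" "r \<in> Fam n" "x \<in> Delta n"
  shows "0 \<le> f_rel r x"
  using Fam_word_in_subset[OF assms(1,2)] assms(3)
    Delta_pos Delta_le_1 sum_Delta_pos sum_Delta_le_1
  unfolding f_rel_def Let_def
  by (intro mult_nonneg_nonneg divide_nonneg_nonneg) (auto simp: less_imp_le)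

lemma f_rel_le_F_max: "n \<ge> 2 \<Longrightarrow> r \<in> Fam n \<Longrightarrow> f_rel r x \<le> F_max n x"
  unfolding F_max_def using finite_Fam by (intro Max_ge) auto

lemma F_max_less_iff: "n \<ge> 2 \<Longrightarrow> F_max n x < c \<longleftrightarrow> (\<forall>r\<in>Fam n. f_rel r x < c)"
  unfolding F_max_def using finite_Fam Fam_nonempty by (subst Max_less_iff) auto

lemma INF_F_max_le:
  assumes "n \<ge> 2" "x \<in> Delta n"
  shows "(INF y\<in>Delta n. F_max n y) \<le> F_max n x"
proof (rule cINF_lower[OF _ assms(2)])
  obtain r where r: "r \<in> Fam n" using Fam_nonempty[OF assms(1)] by blast
  show "bdd_below (F_max n ` Delta n)"
    using order_trans[OF f_rel_nonneg[OF assms(1) r] f_rel_le_F_max[OF assms(1) r]]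
    by (intro bdd_belowI2)
qed

definition shift :: "nat \<Rightarrow> real \<Rightarrow> (word \<Rightarrow> real) \<Rightarrow> word \<Rightarrow> real" where
  "shift n e x \<psi> = x \<psi> + e * transfer {u \<in> Psi n. \<not> conj_word u} conj_completion \<psi>"

lemma sum_shift:
  "sum (shift n e x) A = sum x A + e * sum (transfer {u \<in> Psi n. \<not> conj_word u} conj_completion) A"
  by (simp add: shift_def sum.distrib sum_distrib_left)

lemma sum_shift_Psi: "n \<ge> 2 \<Longrightarrow> sum (shift n e x) (Psi n) = sum x (Psi n)"
  unfolding sum_shift using conj_completion_in_Psi
  by (subst sum_transfer_eq_0) (auto simp: finite_Psi)

lemma shift_non_conj_word:
  assumes "u \<in> Psi n" "\<not> conj_word u"
  shows "shift n e x u = x u + e"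
proof -
  have "transfer {u \<in> Psi n. \<not> conj_word u} conj_completion u = 1"
    using assms conj_word_conj_completion by (intro transfer_source) (auto simp: finite_Psi)
  then show ?thesis by (simp add: shift_def)
qed

lemma tendsto_shift: "((\<lambda>e. shift n e x \<psi>) \<longlongrightarrow> x \<psi>) (at_right 0)"
  unfolding shift_def by (auto intro!: tendsto_eq_intros)

lemma eventually_shift_in_Delta:
  assumes "n \<ge> 2" "x \<in> Delta n"
  shows "\<forall>\<^sub>F e in at_right 0. shift n e x \<in> Delta n"
proof -
  have "\<forall>\<^sub>F e in at_right 0. \<forall>\<psi>\<in>Psi n. 0 < shift n e x \<psi>"
    using Delta_pos[OF assms(2)]
    by (intro eventually_ball_finite finite_Psi ballI order_tendstoD(1)[OF tendsto_shift]) auto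
  then show ?thesis
    by (rule eventually_mono) (use assms in \<open>auto simp: Delta_def sum_shift_Psi\<close>)
qed

lemma f_rel_shift_less:
  assumes "n \<ge> 2" "shiftable_rel n r" "x \<in> Delta n" "shift n e x \<in> Delta n" "0 < e"
  shows "f_rel r (shift n e x) < f_rel r x"
proof -
  have r: "fst r \<in> Psi n" "\<not> conj_word (fst r)" "snd r \<subseteq> Psi n" "snd r \<noteq> {}"
    "\<not> Psi n \<subseteq> snd r" "\<And>u. u \<in> Psi n \<Longrightarrow> conj_completion u \<in> snd r \<Longrightarrow> u \<in> snd r"
    using assms(2) unfolding shiftable_rel_def by auto
  have "0 \<le> sum (transfer {u \<in> Psi n. \<not> conj_word u} conj_completion) (snd r)"
    using r(3,6) finite_subset[OF r(3) finite_Psi] by (intro sum_transfer_nonneg) (auto simp: finite_Psi)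
  then have "sum x (snd r) \<le> sum (shift n e x) (snd r)"
    unfolding sum_shift using assms(5) by simp
  moreover have "x (fst r) < shift n e x (fst r)"
    using assms(5) by (simp add: shift_non_conj_word[OF r(1,2)])
  ultimately show ?thesis
    unfolding f_rel_def Let_def
    using Delta_pos[OF assms(3) r(1)] Delta_le_1[OF assms(4) r(1)]
      sum_Delta_pos[OF assms(3) r(3,4)] sum_Delta_le_1[OF assms(4) r(3)]
      sum_Delta_less_1[OF assms(3) r(3,5)]
    by (intro odds_product_less)
qed

lemma eventually_f_rel_shift_less:
  assumes "fst r \<in> snd r" "snd r \<subseteq> Psi n" "x \<in> Delta n" "f_rel r x < c"
  shows "\<forall>\<^sub>F e in at_right 0. f_rel r (shift n e x) < c"
proof (rule order_tendstoD(2)[OF tendsto_f_rel assms(4)])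
  have "0 < x (fst r)" "0 < sum x (snd r)"
    using assms(1,2) by (auto intro: Delta_pos[OF assms(3)] sum_Delta_pos[OF assms(3)])
  then show "x (fst r) \<noteq> 0" "sum x (snd r) \<noteq> 0" by auto
qed (rule tendsto_shift)

theorem lemma5p4:
  fixes n :: nat and xs :: "word \<Rightarrow> real"
  assumes "n \<ge> 2"
    and "xs \<in> Delta n"
    and "F_max n xs = (INF x\<in>Delta n. F_max n x)"
  shows "\<exists>r0\<in>rel_4b n. f_rel r0 xs = (INF x\<in>Delta n. F_max n x)"
proof (rule ccontr)
  define \<beta> where "\<beta> = (INF x\<in>Delta n. F_max n x)"
  have le_\<beta>: "f_rel r xs \<le> \<beta>" if "r \<in> Fam n" for r
    using f_rel_le_F_max[OF assms(1) that, of xs] assms(3) by (simp add: \<beta>_def)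
  assume "\<not> ?thesis"
  then have "\<forall>r\<in>rel_4b n. f_rel r xs < \<beta>"
    using le_\<beta> by (force simp: \<beta>_def Fam_def)
  then have "\<forall>\<^sub>F e in at_right 0. \<forall>r\<in>rel_4b n. f_rel r (shift n e xs) < \<beta>"
    using finite_subset[OF _ finite_Fam[OF assms(1)], of "rel_4b n"] rel_4b_word_in_subset assms(2)
    by (intro eventually_ball_finite ballI eventually_f_rel_shift_less) (auto simp: Fam_def)
  then obtain e where e: "0 < e" "shift n e xs \<in> Delta n"
      "\<forall>r\<in>rel_4b n. f_rel r (shift n e xs) < \<beta>"
    using eventually_happens'[OF _ eventually_conj[OF eventually_at_right_less
        eventually_conj[OF eventually_shift_in_Delta[OF assms(1,2)]]]]
    by auto
  have "f_rel r (shift n e xs) < \<beta>" if r: "r \<in> Fam n" for r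
  proof (cases "r \<in> rel_4b n")
    case False
    then show ?thesis
      using f_rel_shift_less[OF assms(1) shiftable_rel_Fam[OF assms(1) r False] assms(2) e(2,1)]
        le_\<beta>[OF r] by linarith
  qed (use e(3) in blast)
  then have "F_max n (shift n e xs) < \<beta>"
    using F_max_less_iff[OF assms(1)] by blast
  with INF_F_max_le[OF assms(1) e(2)] show False
    by (simp add: \<beta>_def)
qed

end
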